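(* Let $N\ge2$ be an integer, $u=1/N$, and $\mathscr{C}_k^u:=F^{-(k-1)}[u,1]$. Then \[\sum_{k=1}^n\lambda(\mathscr{C}_{k+1}^u)\log\!\left(1-\frac{k}{n+N}\right)=O\!\left(\frac{n}{\log n}\right)\qquad(n\to\infty).\]
   Context: $\lambda$ is Lebesgue measure; $F$ is the Farey map, $F(x)=x/(1-x)$ for $0\le x\le1/2$, $F(x)=(1-x)/x$ for $1/2<x\le1$; $F^{-k}$ denotes preimage under the $k$-th iterate. *)

theory Defs
  imports "HOL-Analysis.Analysis" "HOL-Library.Landau_Symbols"
begin

definition farey :: "real \<Rightarrow> real" where
  "farey x = (if x \<le> 1/2 then x / (1 - x) else (1 - x) / x)"

definition cyl :: "real \<Rightarrow> nat \<Rightarrow> real set" where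
  "cyl u k = {x \<in> {0..1}. (farey ^^ (k - 1)) x \<in> {u..1}}"

end

theory Submission
  imports Defs "HOL-Real_Asymp.Real_Asymp"
begin

text \<open>
  The inverse branches of the k-th iterate of F are Moebius maps y \<mapsto> (a + b y) / (c + d y)
  with nonnegative integer coefficients and |a d - b c| = 1. Such a branch maps [1/N, 1] into
  the interval of radius N / (c + d)^2 around its value at 1, so the measure of C_{k+1} is at
  most 2 N A_k, where A_k (\<open>branch_mass k\<close>) is the sum of (c + d)^-2 over the branches of
  depth k. The telescoping identity
  \<Sum> 1 / (c (c + d)) = 1 over the branch tree yields the renewal-type inequality
  \<Sum>_{i \<le> m} A_i / (m - i + 2) \<le> 1, which forces any L consecutive A_i to have total mass
  O(L / log L). Bounding -log (1 - k/M) by \<Sum>_{M-k \<le> j < M} 1/j and exchanging the order of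
  summation reduces the claim to \<Sum>_{j < M} 1 / log (j + 2) = O(M / log M).
\<close>

text \<open>The quadruple (a, b, c, d) stands for the inverse branch y \<mapsto> (a + b y) / (c + d y).\<close>

fun farey_branches :: "nat \<Rightarrow> (nat \<times> nat \<times> nat \<times> nat) list" where
  "farey_branches 0 = [(0, 1, 1, 0)]"
| "farey_branches (Suc k) =
     concat (map (\<lambda>(a, b, c, d). [(a, a + b, c, c + d), (a + b, a, c + d, c)]) (farey_branches k))"

lemma sum_list_farey_branches_Suc:
  "(\<Sum>q\<leftarrow>farey_branches (Suc k). f q) =
   (\<Sum>(a, b, c, d)\<leftarrow>farey_branches k. f (a, a + b, c, c + d) + f (a + b, a, c + d, c))"
proof -
  have "(\<Sum>q\<leftarrow>concat (map (\<lambda>(a, b, c, d). [(a, a + b, c, c + d), (a + b, a, c + d, c)]) xs). f q) =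
        (\<Sum>(a, b, c, d)\<leftarrow>xs. f (a, a + b, c, c + d) + f (a + b, a, c + d, c))" for xs
    by (induction xs) auto
  then show ?thesis by simp
qed

lemma farey_branches_det:
  assumes "(a, b, c, d) \<in> set (farey_branches k)"
  shows "c \<ge> 1 \<and> \<bar>real a * real d - real b * real c\<bar> = 1"
  using assms
proof (induction k arbitrary: a b c d)
  case (Suc k)
  then obtain a' b' c' d' where parent: "(a', b', c', d') \<in> set (farey_branches k)"
    and "(a, b, c, d) = (a', a' + b', c', c' + d') \<or> (a, b, c, d) = (a' + b', a', c' + d', c')"
    by auto
  with Suc.IH[OF parent] show ?case by (auto simp: algebra_simps abs_minus_commute)
qed simp

definition branch_weight :: "nat \<times> nat \<times> nat \<times> nat \<Rightarrow> real" where
  "branch_weight q = (case q of (a, b, c, d) \<Rightarrow> 1 / (real c + real d)\<^sup>2)"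

definition branch_mass :: "nat \<Rightarrow> real" where
  "branch_mass k = (\<Sum>q\<leftarrow>farey_branches k. branch_weight q)"

definition branch_sum :: "nat \<Rightarrow> nat \<Rightarrow> real" where
  "branch_sum k j = (\<Sum>(a, b, c, d)\<leftarrow>farey_branches k. 1 / (real c * ((real j + 1) * real c + real d)))"

lemma branch_mass_nonneg: "branch_mass k \<ge> 0"
  unfolding branch_mass_def branch_weight_def by (intro sum_list_nonneg) auto

lemma branch_sum_nonneg: "branch_sum k j \<ge> 0"
  unfolding branch_sum_def by (intro sum_list_nonneg) auto

lemma branch_sum_0: "branch_sum k 0 = 1"
proof (induction k)
  case 0
  show ?case by (simp add: branch_sum_def)
next
  case (Suc k)
  have "1 / (c * (c + (c + d))) + 1 / ((c + d) * ((c + d) + c)) = 1 / (c * (c + d))"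
    if "c > 0" "d \<ge> 0" for c d :: real
  proof -
    have "c + d > 0" "c + (c + d) > 0" using that by auto
    with that show ?thesis by (simp add: divide_simps)
  qed
  then have "branch_sum (Suc k) 0 = branch_sum k 0"
    unfolding branch_sum_def sum_list_farey_branches_Suc
    by (intro arg_cong[where f = sum_list] map_cong refl) (auto dest!: farey_branches_det)
  with Suc.IH show ?case by simp
qed

text \<open>The child (a, a + b, c, c + d) reproduces the term of \<open>branch_sum k (Suc j)\<close>, and the
  child (a + b, a, c + d, c) dominates the contribution (c + d)^-2 / (j + 2) to the mass.\<close>

lemma branch_sum_Suc_ge: "branch_sum k (Suc j) + branch_mass k / (real j + 2) \<le> branch_sum (Suc k) j"
proof -
  have tail_le: "1 / (x\<^sup>2 * (J + 2)) \<le> 1 / (x * ((J + 1) * x + c))"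
    if "0 < c" "c \<le> x" "J \<ge> 0" for x c J :: real
  proof -
    have "x * ((J + 1) * x + c) \<le> x\<^sup>2 * (J + 2)"
      using that by (simp add: power2_eq_square algebra_simps)
    moreover have "x * ((J + 1) * x + c) > 0" using that by (simp add: add_pos_pos)
    ultimately show ?thesis by (simp add: divide_left_mono)
  qed
  have children_ge: "1 / (c * ((J + 2) * c + d)) + 1 / ((c + d)\<^sup>2 * (J + 2)) \<le>
      1 / (c * ((J + 1) * c + (c + d))) + 1 / ((c + d) * ((J + 1) * (c + d) + c))"
    if "c \<ge> 1" "d \<ge> 0" "J \<ge> 0" for c d J :: real
    using tail_le[of c "c + d" J] that by (simp add: algebra_simps)
  have "branch_sum k (Suc j) + branch_mass k / (real j + 2) =
      (\<Sum>(a, b, c, d)\<leftarrow>farey_branches k. 1 / (real c * ((real j + 2) * real c + real d))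
        + 1 / (real c + real d)\<^sup>2 / (real j + 2))"
    unfolding branch_sum_def branch_mass_def branch_weight_def
    by (simp add: sum_list_addf divide_inverse sum_list_const_mult case_prod_unfold algebra_simps)
  also have "\<dots> \<le> branch_sum (Suc k) j"
    unfolding branch_sum_def sum_list_farey_branches_Suc
    by (intro sum_list_mono) (auto dest!: farey_branches_det intro!: children_ge)
  finally show ?thesis .
qed

lemma branch_sum_ge: "(\<Sum>i<k. branch_mass i / (real (j + k - i) + 1)) \<le> branch_sum k j"
proof (induction k arbitrary: j)
  case 0
  show ?case using branch_sum_nonneg by simp
next
  case (Suc k)
  have "(\<Sum>i<Suc k. branch_mass i / (real (j + Suc k - i) + 1)) =
        (\<Sum>i<k. branch_mass i / (real (Suc j + k - i) + 1)) + branch_mass k / (real j + 2)"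
    by (simp add: Suc_diff_le)
  also have "\<dots> \<le> branch_sum k (Suc j) + branch_mass k / (real j + 2)"
    using Suc.IH[of "Suc j"] by simp
  also have "\<dots> \<le> branch_sum (Suc k) j" by (rule branch_sum_Suc_ge)
  finally show ?case .
qed

lemma branch_mass_renewal: "(\<Sum>i\<le>m. branch_mass i / (real (m - i) + 2)) \<le> 1"
  using branch_sum_ge[where k = "Suc m" and j = 0]
  by (simp add: branch_sum_0 lessThan_Suc_atMost Suc_diff_le add.commute)

definition mobius :: "nat \<times> nat \<times> nat \<times> nat \<Rightarrow> real \<Rightarrow> real" where
  "mobius q y = (case q of (a, b, c, d) \<Rightarrow> (real a + real b * y) / (real c + real d * y))"

lemma mobius_comp_left:
  assumes "1 + y \<noteq> 0"
  shows "mobius (a, b, c, d) (y / (1 + y)) = mobius (a, a + b, c, c + d) y"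
proof -
  from assms have "real a + real b * (y / (1 + y)) = (real a + real (a + b) * y) / (1 + y)"
    and "real c + real d * (y / (1 + y)) = (real c + real (c + d) * y) / (1 + y)"
    by (simp_all add: field_simps)
  with assms show ?thesis by (simp add: mobius_def)
qed

lemma mobius_comp_right:
  assumes "1 + y \<noteq> 0"
  shows "mobius (a, b, c, d) (1 / (1 + y)) = mobius (a + b, a, c + d, c) y"
proof -
  from assms have "real a + real b * (1 / (1 + y)) = (real (a + b) + real a * y) / (1 + y)"
    and "real c + real d * (1 / (1 + y)) = (real (c + d) + real c * y) / (1 + y)"
    by (simp_all add: field_simps)
  with assms show ?thesis by (simp add: mobius_def)
qed

lemma farey_in_unit: "x \<in> {0..1} \<Longrightarrow> farey x \<in> {0..1}"
  unfolding farey_def by (auto simp: field_simps)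

lemma funpow_farey_in_unit: "x \<in> {0..1} \<Longrightarrow> (farey ^^ k) x \<in> {0..1}"
  by (induction k) (simp_all add: farey_in_unit del: atLeastAtMost_iff)

lemma farey_inverse:
  "x \<in> {0..1} \<Longrightarrow> x = (if x \<le> 1/2 then farey x / (1 + farey x) else 1 / (1 + farey x))"
  unfolding farey_def by (auto simp: field_simps)

lemma farey_branches_cover:
  assumes "x \<in> {0..1}"
  shows "\<exists>q\<in>set (farey_branches k). x = mobius q ((farey ^^ k) x)"
proof (induction k)
  case 0
  show ?case by (simp add: mobius_def)
next
  case (Suc k)
  define z where "z = (farey ^^ k) x"
  have z: "z \<in> {0..1}" and "farey z \<in> {0..1}"
    using funpow_farey_in_unit[OF assms] farey_in_unit by (auto simp: z_def)
  then have y: "1 + farey z \<noteq> 0" by auto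
  have step: "(farey ^^ Suc k) x = farey z" by (simp add: z_def)
  from Suc.IH obtain a b c d where q: "(a, b, c, d) \<in> set (farey_branches k)"
    and x: "x = mobius (a, b, c, d) z"
    by (auto simp: z_def)
  show ?case
  proof (cases "z \<le> 1/2")
    case True
    then have "x = mobius (a, a + b, c, c + d) (farey z)"
      using x farey_inverse[OF z] mobius_comp_left[OF y] by simp
    moreover have "(a, a + b, c, c + d) \<in> set (farey_branches (Suc k))" using q by force
    ultimately show ?thesis unfolding step by blast
  next
    case False
    then have "x = mobius (a + b, a, c + d, c) (farey z)"
      using x farey_inverse[OF z] mobius_comp_right[OF y] by simp
    moreover have "(a + b, a, c + d, c) \<in> set (farey_branches (Suc k))" using q by force
    ultimately show ?thesis unfolding step by blast
  qed
qed

lemma mobius_dist_le: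
  assumes "0 < u" "u \<le> y" "y \<le> 1" "c > 0"
    and det: "\<bar>real a * real d - real b * real c\<bar> = 1"
  shows "\<bar>mobius (a, b, c, d) y - mobius (a, b, c, d) 1\<bar> \<le> branch_weight (a, b, c, d) / u"
proof -
  have cd: "real c + real d > 0" using assms by simp
  have "u * real c \<le> real c" using assms by (simp add: mult_left_le_one_le)
  moreover have "u * real d \<le> y * real d" using assms by (intro mult_right_mono) auto
  ultimately have den: "u * (real c + real d) \<le> real c + real d * y" by (simp add: algebra_simps)
  have den_pos: "real c + real d * y > 0" using assms by (intro add_pos_nonneg) auto
  have "mobius (a, b, c, d) y - mobius (a, b, c, d) 1 =
      (real a * real d - real b * real c) * (1 - y) / ((real c + real d * y) * (real c + real d))"
    using den_pos cd by (simp add: mobius_def field_simps)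
  then have "\<bar>mobius (a, b, c, d) y - mobius (a, b, c, d) 1\<bar> =
      (1 - y) / ((real c + real d * y) * (real c + real d))"
    using den_pos cd assms by (simp add: abs_mult det)
  also have "\<dots> \<le> 1 / ((real c + real d * y) * (real c + real d))"
    using den_pos cd assms by (intro divide_right_mono) auto
  also have "\<dots> \<le> 1 / (u * (real c + real d) * (real c + real d))"
    using den den_pos cd assms by (intro divide_left_mono mult_right_mono mult_pos_pos) auto
  also have "\<dots> = branch_weight (a, b, c, d) / u"
    by (simp add: branch_weight_def power2_eq_square)
  finally show ?thesis .
qed

lemma cyl_subset_branch_intervals:
  assumes "u > 0"
  shows "cyl u (k + 1) \<subseteq> (\<Union>i<length (farey_branches k).
    {mobius (farey_branches k ! i) 1 - branch_weight (farey_branches k ! i) / u ..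
     mobius (farey_branches k ! i) 1 + branch_weight (farey_branches k ! i) / u})"
proof
  fix x assume "x \<in> cyl u (k + 1)"
  define y where "y = (farey ^^ k) x"
  have x: "x \<in> {0..1}" and y: "y \<in> {u..1}"
    using \<open>x \<in> cyl u (k + 1)\<close> by (auto simp: cyl_def y_def)
  obtain a b c d where q: "(a, b, c, d) \<in> set (farey_branches k)"
    and xq: "x = mobius (a, b, c, d) y"
    using farey_branches_cover[OF x, of k] by (auto simp: y_def)
  obtain i where i: "i < length (farey_branches k)" "farey_branches k ! i = (a, b, c, d)"
    using q by (meson in_set_conv_nth)
  have "\<bar>x - mobius (a, b, c, d) 1\<bar> \<le> branch_weight (a, b, c, d) / u"
    using mobius_dist_le[of u y] farey_branches_det[OF q] assms y xq by auto
  then show "x \<in> (\<Union>i<length (farey_branches k).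
    {mobius (farey_branches k ! i) 1 - branch_weight (farey_branches k ! i) / u ..
     mobius (farey_branches k ! i) 1 + branch_weight (farey_branches k ! i) / u})"
    using i by (intro UN_I[of i]) (auto simp: abs_le_iff)
qed

lemma measure_cyl_le:
  assumes "u > 0"
  shows "measure lebesgue (cyl u (k + 1)) \<le> 2 / u * branch_mass k"
proof -
  define q where "q i = farey_branches k ! i" for i
  define I where
    "I i = {mobius (q i) 1 - branch_weight (q i) / u .. mobius (q i) 1 + branch_weight (q i) / u}"
    for i
  have weight_nonneg: "branch_weight p \<ge> 0" for p by (simp add: branch_weight_def split: prod.splits)
  have "measure lebesgue (cyl u (k + 1)) \<le> measure lebesgue (\<Union>i<length (farey_branches k). I i)"
  proof (cases "cyl u (k + 1) \<in> sets lebesgue")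
    case True
    have "(\<Union>i<length (farey_branches k). I i) \<in> fmeasurable lebesgue"
      by (intro fmeasurable.finite_UN) (auto simp: I_def)
    with True show ?thesis
      using cyl_subset_branch_intervals[OF assms, of k]
      by (intro measure_mono_fmeasurable) (auto simp: I_def q_def)
  qed (simp add: measure_notin_sets)
  also have "\<dots> \<le> (\<Sum>i<length (farey_branches k). measure lebesgue (I i))"
    by (intro measure_UNION_le) (auto simp: I_def)
  also have "\<dots> = (\<Sum>i<length (farey_branches k). 2 / u * branch_weight (q i))"
    using weight_nonneg assms by (simp add: I_def)
  also have "\<dots> = 2 / u * branch_mass k"
    by (simp add: branch_mass_def sum_list_sum_nth atLeast0LessThan sum_distrib_left q_def)
  finally show ?thesis .
qed

lemma ln_diff_le_sum_inverse:
  assumes "1 \<le> p" "p \<le> q"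
  shows "ln (real q) - ln (real p) \<le> (\<Sum>j\<in>{p..<q}. 1 / real j)"
  using assms(2)
proof (induction q rule: dec_induct)
  case (step q)
  have q: "real q \<ge> 1" using step assms by simp
  have "ln (real (Suc q)) - ln (real q) = ln (real (Suc q) / real q)" using q by (simp add: ln_div)
  also have "\<dots> \<le> real (Suc q) / real q - 1" using q by (intro ln_le_minus_one) auto
  also have "\<dots> = 1 / real q" using q by (simp add: field_simps)
  finally show ?case using step by simp
qed simp

lemma sum_inverse_from_2_ge_ln:
  assumes "L \<ge> 1"
  shows "ln (real L + 2) / 4 \<le> (\<Sum>t<L. 1 / (real t + 2))"
proof -
  have "(2::real) ^ 4 \<le> 3 ^ 3" by simp
  also have "\<dots> \<le> (real L + 2) ^ 3" using assms by (intro power_mono) auto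
  finally have "ln ((2::real) ^ 4) \<le> ln ((real L + 2) ^ 3)" by (subst ln_le_cancel_iff) auto
  then have "4 * ln 2 \<le> 3 * ln (real L + 2)" by (subst (asm) (1 2) ln_realpow) auto
  moreover have "ln (real (L + 2)) - ln (real 2) \<le> (\<Sum>j\<in>{2..<L + 2}. 1 / real j)"
    by (rule ln_diff_le_sum_inverse) auto
  moreover have "(\<Sum>j\<in>{2..<L + 2}. 1 / real j) = (\<Sum>t<L. 1 / (real t + 2))"
    unfolding sum.atLeastLessThan_shift_0[of _ 2] lessThan_atLeast0 by (simp add: add.commute)
  ultimately show ?thesis by (simp add: add.commute)
qed

lemma neg_ln_one_minus_le_sum_inverse:
  assumes "k < M"
  shows "- ln (1 - real k / real M) \<le> (\<Sum>j\<in>{M - k..<M}. 1 / real j)"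
proof -
  have "1 - real k / real M = real (M - k) / real M" using assms by (simp add: field_simps)
  then have "- ln (1 - real k / real M) = ln (real M) - ln (real (M - k))"
    using assms by (simp add: ln_div)
  also have "\<dots> \<le> (\<Sum>j\<in>{M - k..<M}. 1 / real j)"
    using assms by (intro ln_diff_le_sum_inverse) auto
  finally show ?thesis .
qed

context
  fixes a :: "nat \<Rightarrow> real"
  assumes nonneg: "\<And>i. a i \<ge> 0"
    and renewal: "\<And>m. (\<Sum>i\<le>m. a i / (real (m - i) + 2)) \<le> 1"
begin

lemma harmonic_window_sum_le: "(\<Sum>t<L. 1 / (real t + 2)) * (\<Sum>i\<in>{s..<s + L}. a i) \<le> 2 * real L"
proof -
  define g where "g i m = (if i \<le> m then a i / (real (m - i) + 2) else 0)" for i m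
  have g_nonneg: "g i m \<ge> 0" for i m using nonneg by (simp add: g_def)
  have row_le: "(\<Sum>t<L. a i / (real t + 2)) \<le> (\<Sum>m\<in>{s..<s + 2 * L}. g i m)"
    if "i \<in> {s..<s + L}" for i
  proof -
    have "(\<Sum>t<L. a i / (real t + 2)) = (\<Sum>m\<in>(\<lambda>t. t + i) ` {..<L}. g i m)"
      by (subst sum.reindex) (auto simp: inj_on_def g_def)
    also have "\<dots> \<le> (\<Sum>m\<in>{s..<s + 2 * L}. g i m)"
      using that by (intro sum_mono2) (auto simp: g_nonneg)
    finally show ?thesis .
  qed
  have column_le: "(\<Sum>i\<in>{s..<s + L}. g i m) \<le> 1" for m
  proof -
    have "(\<Sum>i\<in>{s..<s + L}. g i m) = (\<Sum>i\<in>{s..<s + L} \<inter> {..m}. g i m)"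
      by (rule sum.mono_neutral_right) (auto simp: g_def)
    also have "\<dots> \<le> (\<Sum>i\<le>m. g i m)"
      using g_nonneg by (intro sum_mono2) auto
    also have "\<dots> = (\<Sum>i\<le>m. a i / (real (m - i) + 2))"
      by (intro sum.cong) (auto simp: g_def)
    finally show ?thesis using renewal[of m] by linarith
  qed
  have "(\<Sum>t<L. 1 / (real t + 2)) * (\<Sum>i\<in>{s..<s + L}. a i) =
      (\<Sum>i\<in>{s..<s + L}. \<Sum>t<L. a i / (real t + 2))"
    by (simp add: sum_distrib_right sum_divide_distrib sum.swap[of _ "{..<L}"])
  also have "\<dots> \<le> (\<Sum>i\<in>{s..<s + L}. \<Sum>m\<in>{s..<s + 2 * L}. g i m)"
    by (intro sum_mono row_le)
  also have "\<dots> = (\<Sum>m\<in>{s..<s + 2 * L}. \<Sum>i\<in>{s..<s + L}. g i m)"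
    by (rule sum.swap)
  also have "\<dots> \<le> (\<Sum>m\<in>{s..<s + 2 * L}. 1)"
    by (intro sum_mono column_le)
  finally show ?thesis by simp
qed

lemma window_sum_le:
  assumes "L \<ge> 1"
  shows "(\<Sum>i\<in>{s..<s + L}. a i) \<le> 8 * real L / ln (real L + 2)"
proof -
  have "ln (real L + 2) / 4 * (\<Sum>i\<in>{s..<s + L}. a i) \<le> 2 * real L"
    using sum_inverse_from_2_ge_ln[OF assms] harmonic_window_sum_le[of L s] nonneg
    by (meson mult_right_mono order_trans sum_nonneg)
  moreover have "ln (real L + 2) > 0" by simp
  ultimately show ?thesis by (simp add: field_simps)
qed

lemma log_weighted_sum_le:
  assumes "n < M"
  shows "(\<Sum>k=1..n. a k * - ln (1 - real k / real M)) \<le> 8 * (\<Sum>j\<in>{1..<M}. 1 / ln (real j + 2))"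
proof -
  have window: "{j \<in> {1..<M}. M \<le> j + k} = {M - k..<M}" if "k \<in> {1..n}" for k
    using that assms by auto
  have log_le: "- ln (1 - real k / real M) \<le> (\<Sum>j\<in>{1..<M}. if M \<le> j + k then 1 / real j else 0)"
    if "k \<in> {1..n}" for k
    using neg_ln_one_minus_le_sum_inverse[of k M] that assms
    unfolding sum.inter_filter[OF finite_atLeastLessThan, symmetric] window[OF that] by simp
  have tail_le: "(\<Sum>k=1..n. if M \<le> j + k then a k else 0) \<le> 8 * real j / ln (real j + 2)"
    if "j \<in> {1..<M}" for j
  proof -
    have "(\<Sum>k=1..n. if M \<le> j + k then a k else 0) = (\<Sum>k\<in>{k \<in> {1..n}. M \<le> j + k}. a k)"
      by (rule sum.inter_filter[symmetric]) simp
    also have "\<dots> \<le> (\<Sum>k\<in>{M - j..<M - j + j}. a k)"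
      using nonneg that assms by (intro sum_mono2) auto
    also have "\<dots> \<le> 8 * real j / ln (real j + 2)"
      using that by (intro window_sum_le) auto
    finally show ?thesis .
  qed
  have "(\<Sum>k=1..n. a k * - ln (1 - real k / real M)) \<le>
        (\<Sum>k=1..n. a k * (\<Sum>j\<in>{1..<M}. if M \<le> j + k then 1 / real j else 0))"
    using log_le nonneg by (intro sum_mono mult_left_mono) auto
  also have "\<dots> = (\<Sum>j\<in>{1..<M}. 1 / real j * (\<Sum>k=1..n. if M \<le> j + k then a k else 0))"
    unfolding sum_distrib_left by (subst sum.swap) (auto intro!: sum.cong)
  also have "\<dots> \<le> (\<Sum>j\<in>{1..<M}. 1 / real j * (8 * real j / ln (real j + 2)))"
    using tail_le by (intro sum_mono mult_left_mono) auto
  also have "\<dots> = 8 * (\<Sum>j\<in>{1..<M}. 1 / ln (real j + 2))"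
    by (simp add: sum_distrib_left)
  finally show ?thesis .
qed

end

lemma sum_inverse_ln_le:
  assumes "M \<ge> 2"
  shows "(\<Sum>j\<in>{1..<M}. 1 / ln (real j + 2)) \<le> sqrt (real M) / ln 2 + 2 * real M / ln (real M)"
proof -
  define K where "K = nat \<lfloor>sqrt (real M)\<rfloor>"
  have lnM: "ln (real M) > 0" using assms by simp
  have term_le: "1 / ln (real j + 2) \<le> (if j \<in> {..<K} then 1 / ln 2 else 0) + 2 / ln (real M)" for j
  proof (cases "j < K")
    case True
    have "1 / ln (real j + 2) \<le> 1 / ln 2" by (intro divide_left_mono) auto
    with True lnM show ?thesis by (simp add: add_increasing2)
  next
    case False
    have "sqrt (real M) < real K + 1"
      using real_of_int_floor_add_one_gt[of "sqrt (real M)"] by (simp add: K_def)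
    also have "\<dots> < real j + 2" using False by simp
    finally have "ln (real M) / 2 < ln (real j + 2)"
      using assms by (simp add: ln_sqrt[symmetric])
    then have "1 / ln (real j + 2) \<le> 2 / ln (real M)"
      using lnM by (simp add: divide_simps)
    with False show ?thesis by simp
  qed
  have "(\<Sum>j\<in>{1..<M}. 1 / ln (real j + 2)) \<le>
      (\<Sum>j\<in>{1..<M} \<inter> {..<K}. 1 / ln 2) + (\<Sum>j\<in>{1..<M}. 2 / ln (real M))"
    unfolding sum.inter_restrict[OF finite_atLeastLessThan] sum.distrib[symmetric]
    by (intro sum_mono term_le)
  also have "\<dots> \<le> (\<Sum>j<K. 1 / ln 2) + real M * (2 / ln (real M))"
    using lnM by (intro add_mono sum_mono2) (auto intro!: divide_right_mono)
  also have "\<dots> \<le> sqrt (real M) / ln 2 + 2 * real M / ln (real M)"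
    by (simp add: K_def divide_right_mono mult.commute)
  finally show ?thesis .
qed

lemma abs_sum_measure_cyl_ln_le:
  assumes "u > 0" "n < M"
  shows "\<bar>\<Sum>k=1..n. measure lebesgue (cyl u (k + 1)) * ln (1 - real k / real M)\<bar>
    \<le> 16 / u * (\<Sum>j\<in>{1..<M}. 1 / ln (real j + 2))"
proof -
  define m where "m k = measure lebesgue (cyl u (k + 1))" for k
  have ln_nonpos: "ln (1 - real k / real M) \<le> 0" if "k \<in> {1..n}" for k
    using that assms by (simp add: field_simps)
  have "(\<Sum>k=1..n. m k * ln (1 - real k / real M)) \<le> 0"
    using ln_nonpos by (intro sum_nonpos mult_nonneg_nonpos) (auto simp: m_def)
  then have "\<bar>\<Sum>k=1..n. m k * ln (1 - real k / real M)\<bar> =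
      (\<Sum>k=1..n. m k * - ln (1 - real k / real M))"
    by (simp add: sum_negf[symmetric])
  also have "\<dots> \<le> (\<Sum>k=1..n. 2 / u * branch_mass k * - ln (1 - real k / real M))"
    using ln_nonpos measure_cyl_le[OF assms(1)] by (intro sum_mono mult_right_mono) (auto simp: m_def)
  also have "\<dots> = 2 / u * (\<Sum>k=1..n. branch_mass k * - ln (1 - real k / real M))"
    by (simp add: sum_distrib_left mult.assoc)
  also have "\<dots> \<le> 2 / u * (8 * (\<Sum>j\<in>{1..<M}. 1 / ln (real j + 2)))"
    using assms branch_mass_nonneg branch_mass_renewal
    by (intro mult_left_mono log_weighted_sum_le) auto
  finally show ?thesis by (simp add: m_def)
qed

theorem mainTheorem11:
  fixes N :: nat
  assumes "N \<ge> 2"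
  shows "(\<lambda>n::nat. \<Sum>k=1..n. measure lebesgue (cyl (1 / real N) (k + 1))
             * ln (1 - real k / real (n + N)))
         \<in> O(\<lambda>n. real n / ln (real n))"
proof -
  define S where "S M = (\<Sum>j\<in>{1..<M}. 1 / ln (real j + 2))" for M
  have S_nonneg: "S M \<ge> 0" for M by (simp add: S_def sum_nonneg)
  have sum_le: "\<bar>\<Sum>k=1..n. measure lebesgue (cyl (1 / real N) (k + 1))
      * ln (1 - real k / real (n + N))\<bar> \<le> 16 * real N * S (n + N)" for n
    using abs_sum_measure_cyl_ln_le[of "1 / real N" n "n + N"] assms by (simp add: S_def)
  have S_le: "S (n + N) \<le> sqrt (real (n + N)) / ln 2 + 2 * real (n + N) / ln (real (n + N))" for n
    using sum_inverse_ln_le[of "n + N"] assms by (simp add: S_def)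
  have "(\<lambda>n. \<Sum>k=1..n. measure lebesgue (cyl (1 / real N) (k + 1)) * ln (1 - real k / real (n + N)))
      \<in> O(\<lambda>n. S (n + N))"
    using sum_le S_nonneg by (intro bigoI[where c = "16 * real N"] always_eventually) auto
  also have "(\<lambda>n. S (n + N))
      \<in> O(\<lambda>n. sqrt (real (n + N)) / ln 2 + 2 * real (n + N) / ln (real (n + N)))"
    using S_le S_nonneg
    by (intro landau_o.big_mono always_eventually) (auto intro: order_trans[OF _ abs_ge_self])
  also have "(\<lambda>n. sqrt (real (n + N)) / ln 2 + 2 * real (n + N) / ln (real (n + N)))
      \<in> O(\<lambda>n. real n / ln (real n))"
    by real_asymp
  finally show ?thesis .
qed

end
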